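(* For all $n,k\ge 0$, in $\mathbb{Z}[q]$, $$e(n,k)+o(n,k)\,q\equiv q^{\binom{k+1}{2}}\begin{bmatrix} n\\ k\end{bmatrix}_q \pmod{q^2-1},\qquad L(n,k)+\bar L(n,k)\,q\equiv \begin{bmatrix} n\\ k\end{bmatrix}_q\pmod{q^2-1}.$$
   Context: $e(n,k)$ (resp. $o(n,k)$) is the number of $k$-element subsets of $\{1,\dots,n\}$ with even (resp. odd) sum of elements, the empty set counting as even. $\begin{bmatrix} n\\ k\end{bmatrix}_q=\prod_{i=1}^{k}\frac{1-q^{n-k+i}}{1-q^i}$ is the Gaussian ($q$-)binomial coefficient (a polynomial in $q$, zero for $k>n$). Losanitsch's triangle $(L(n,k))$ is defined by $L(0,k)=[k=0]$, $L(1,k)=[k\le 1]$ for $k\ge0$, $L(n,k)=0$ for $k<0$, and for $n\ge 2$: $L(n,k)=L(n-2,k)+\binom{n-2}{k-1}+L(n-2,k-2)$ (with $\binom{m}{j}=0$ for $j<0$ or $j>m$). $\bar L(n,k)=\binom{n}{k}-L(n,k)$. *)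

theory Defs
  imports "HOL-Computational_Algebra.Polynomial"
begin

definition even_subsets :: "nat \<Rightarrow> nat \<Rightarrow> nat" where
  "even_subsets n k = card {S. S \<subseteq> {1..n} \<and> card S = k \<and> even (\<Sum>S)}"

definition odd_subsets :: "nat \<Rightarrow> nat \<Rightarrow> nat" where
  "odd_subsets n k = card {S. S \<subseteq> {1..n} \<and> card S = k \<and> odd (\<Sum>S)}"

text \<open>Gaussian binomial coefficient as a polynomial in q over the integers,
  via the product formula (the division is exact); zero for k > n.\<close>
definition qbinom :: "nat \<Rightarrow> nat \<Rightarrow> int poly" where
  "qbinom n k = (if k \<le> n then
      (\<Prod>i\<in>{1..k}. 1 - [:0,1:] ^ (n - k + i)) div (\<Prod>i\<in>{1..k}. 1 - [:0,1:] ^ i)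
    else 0)"

definition binomz :: "nat \<Rightarrow> int \<Rightarrow> int" where
  "binomz m j = (if 0 \<le> j \<and> j \<le> int m then int (m choose nat j) else 0)"

fun losanitsch :: "nat \<Rightarrow> int \<Rightarrow> int" where
  "losanitsch 0 k = (if k = 0 then 1 else 0)"
| "losanitsch (Suc 0) k = (if 0 \<le> k \<and> k \<le> 1 then 1 else 0)"
| "losanitsch (Suc (Suc n)) k =
     (if k < 0 then 0 else losanitsch n k + binomz n (k - 1) + losanitsch n (k - 2))"

definition losanitsch_bar :: "nat \<Rightarrow> int \<Rightarrow> int" where
  "losanitsch_bar n k = binomz n k - losanitsch n k"

end

(*
  A polynomial with integer coefficients is divisible by q^2 - 1 iff it vanishes at q = 1 and
  at q = -1, so both congruences are statements about values at q = 1 and q = -1.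

  The Gaussian binomial satisfies [n+1, k+1] = [n, k] + q^(k+1) [n, k+1], so at q = 1 it is the
  binomial coefficient. Splitting the (k+1)-subsets of {1..n+1} according to whether they contain 1,
  and shifting the rest down by one, shows that the generating polynomial of the element sums of
  the k-subsets of {1..n} satisfies the same recursion after division by q^((k+1) choose 2); hence
  it equals q^((k+1) choose 2) [n, k]. Its values at 1 and -1 are e(n,k) + o(n,k) and e(n,k) - o(n,k).

  At q = -1 the recursion, applied twice, collapses to g(n+2, k) = g(n, k) + g(n, k-2), which is
  also the recursion of 2 L(n,k) - binom(n,k) inherited from Losanitsch's triangle.
*)

theory Submission
  imports Defs
begin

fun gauss_binomial :: "nat \<Rightarrow> nat \<Rightarrow> 'a::comm_ring_1 poly" where
  "gauss_binomial n 0 = 1"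
| "gauss_binomial 0 (Suc k) = 0"
| "gauss_binomial (Suc n) (Suc k) = gauss_binomial n k + [:0,1:] ^ Suc k * gauss_binomial n (Suc k)"

lemma gauss_binomial_eq_0: "n < k \<Longrightarrow> gauss_binomial n k = 0"
proof (induction n arbitrary: k)
  case 0
  then show ?case by (cases k) auto
next
  case (Suc n)
  then show ?case by (cases k) auto
qed

lemma poly_gauss_binomial_1: "poly (gauss_binomial n k) 1 = of_nat (n choose k)"
  by (induction n k rule: gauss_binomial.induct) auto

lemma q_falling_prod_eq_0:
  "n < k \<Longrightarrow> (\<Prod>i<k. 1 - [:0,1:] ^ (n - i) :: 'a::comm_ring_1 poly) = 0"
  by (intro prod_zero bexI[of _ n]) auto

lemma gauss_binomial_mult_q_factorial:
  "gauss_binomial n k * (\<Prod>i\<in>{1..k}. 1 - [:0,1:] ^ i)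
     = (\<Prod>i<k. 1 - [:0,1:] ^ (n - i) :: 'a::comm_ring_1 poly)"
proof (induction n k rule: gauss_binomial.induct)
  case (1 n)
  show ?case by simp
next
  case (2 k)
  show ?case by (simp add: q_falling_prod_eq_0)
next
  case (3 n k)
  define q :: "'a poly" where "q = [:0,1:]"
  define F where "F j = (\<Prod>i\<in>{1..j}. 1 - q ^ i)" for j
  define N where "N j = (\<Prod>i<j. 1 - q ^ (n - i))" for j
  have IH: "gauss_binomial n k * F k = N k" "gauss_binomial n (Suc k) * F (Suc k) = N (Suc k)"
    using "3.IH" unfolding q_def F_def N_def by simp_all
  have factor_identity: "N k * (1 - q ^ Suc k + q ^ Suc k * (1 - q ^ (n - k))) = N k * (1 - q ^ Suc n)"
  proof (cases "k \<le> n")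
    case True
    then have "q ^ Suc k * q ^ (n - k) = q ^ Suc n"
      by (simp only: power_add [symmetric]) simp
    then show ?thesis by (simp add: algebra_simps)
  next
    case False
    then show ?thesis by (simp add: N_def q_def q_falling_prod_eq_0)
  qed
  have "gauss_binomial (Suc n) (Suc k) * F (Suc k)
      = gauss_binomial n k * F k * (1 - q ^ Suc k) + q ^ Suc k * (gauss_binomial n (Suc k) * F (Suc k))"
    by (simp add: F_def q_def algebra_simps)
  also have "\<dots> = N k * (1 - q ^ Suc k + q ^ Suc k * (1 - q ^ (n - k)))"
    by (simp only: IH) (simp add: N_def algebra_simps)
  also have "\<dots> = (1 - q ^ Suc n) * N k"
    by (subst factor_identity) (rule mult.commute)
  also have "\<dots> = (\<Prod>i<Suc k. 1 - q ^ (Suc n - i))"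
    by (simp only: prod.lessThan_Suc_shift) (simp add: N_def)
  finally show ?case by (simp add: q_def F_def)
qed

lemma q_factorial_nonzero: "(\<Prod>i\<in>{1..k}. 1 - [:0,1:] ^ i) \<noteq> (0 :: int poly)"
proof -
  have "1 - [:0,1:] ^ i \<noteq> (0 :: int poly)" if "i \<in> {1..k}" for i
  proof
    assume "1 - [:0,1:] ^ i = (0 :: int poly)"
    then have "poly (1 - [:0,1:] ^ i) 0 = (0 :: int)" by simp
    with that show False by (simp add: power_0_left)
  qed
  then show ?thesis by (simp add: prod_zero_iff)
qed

lemma qbinom_eq_gauss_binomial: "qbinom n k = gauss_binomial n k"
proof (cases "k \<le> n")
  case True
  have "(\<Prod>i\<in>{1..k}. 1 - [:0,1:] ^ (n - k + i)) = (\<Prod>i<k. 1 - [:0,1:] ^ (n - i) :: int poly)"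
    by (rule prod.reindex_bij_witness[where i = "\<lambda>j. k - j" and j = "\<lambda>i. k - i"])
      (use True in auto)
  then show ?thesis
    using True gauss_binomial_mult_q_factorial[of n k] q_factorial_nonzero[of k]
    by (metis qbinom_def nonzero_mult_div_cancel_right)
next
  case False
  then show ?thesis by (simp add: qbinom_def gauss_binomial_eq_0)
qed

definition k_subsets :: "nat \<Rightarrow> nat \<Rightarrow> nat set set" where
  "k_subsets n k = {S. S \<subseteq> {1..n} \<and> card S = k}"

lemma finite_k_subsets: "finite (k_subsets n k)"
  unfolding k_subsets_def by (rule finite_subset[of _ "Pow {1..n}"]) auto

lemma finite_if_in_k_subsets: "S \<in> k_subsets n k \<Longrightarrow> finite S"
  unfolding k_subsets_def using rev_finite_subset by blast

lemma k_subsets_0: "k_subsets n 0 = {{}}"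
  unfolding k_subsets_def by (auto dest: finite_subset)

lemma k_subsets_0_Suc: "k_subsets 0 (Suc k) = {}"
  unfolding k_subsets_def by auto

lemma k_subsets_Suc_Suc:
  "k_subsets (Suc n) (Suc k)
     = (\<lambda>T. Suc ` T) ` k_subsets n (Suc k) \<union> (\<lambda>T. insert 1 (Suc ` T)) ` k_subsets n k"
proof (intro equalityI subsetI)
  fix S assume S: "S \<in> k_subsets (Suc n) (Suc k)"
  then have "S - {1} \<subseteq> Suc ` {1..n}"
    by (auto simp: k_subsets_def image_Suc_atLeastAtMost)
  then obtain T where T: "T \<subseteq> {1..n}" "S - {1} = Suc ` T"
    by (elim subset_image_iff[THEN iffD1, elim_format] exE conjE)
  have card_T: "card T = card (S - {1})"
    using T(2) card_image[of Suc T] by simp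
  have "finite S" "card S = Suc k"
    using S finite_if_in_k_subsets[OF S] by (simp_all add: k_subsets_def)
  show "S \<in> (\<lambda>T. Suc ` T) ` k_subsets n (Suc k) \<union> (\<lambda>T. insert 1 (Suc ` T)) ` k_subsets n k"
  proof (cases "1 \<in> S")
    case True
    have "S = insert 1 (Suc ` T)"
      using True T(2) by blast
    moreover have "card T = k"
      using True card_T \<open>finite S\<close> \<open>card S = Suc k\<close> by simp
    ultimately show ?thesis
      using T(1) by (auto simp: k_subsets_def)
  next
    case False
    then have "S - {1} = S"
      by simp
    then have "S = Suc ` T" "card T = Suc k"
      using T(2) card_T \<open>card S = Suc k\<close> by simp_all
    then show ?thesis using T(1) by (auto simp: k_subsets_def)
  qed
next
  fix S assume "S \<in> (\<lambda>T. Suc ` T) ` k_subsets n (Suc k) \<union> (\<lambda>T. insert 1 (Suc ` T)) ` k_subsets n k"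
  then obtain T j where T: "T \<in> k_subsets n j"
    and S: "S = Suc ` T \<and> j = Suc k \<or> S = insert 1 (Suc ` T) \<and> j = k"
    by auto
  have "finite T" "1 \<notin> Suc ` T" "card (Suc ` T) = j" "Suc ` T \<subseteq> {1..Suc n}"
    using T finite_if_in_k_subsets[OF T] by (auto simp: k_subsets_def card_image)
  with S show "S \<in> k_subsets (Suc n) (Suc k)"
    by (auto simp: k_subsets_def)
qed

definition subset_sum_poly :: "nat \<Rightarrow> nat \<Rightarrow> 'a::comm_ring_1 poly" where
  "subset_sum_poly n k = (\<Sum>S\<in>k_subsets n k. [:0,1:] ^ \<Sum>S)"

lemma sum_image_Suc: "\<Sum>(Suc ` T) = \<Sum>T + card T"
  using sum_Suc[of "\<lambda>x. x" T] by (simp add: sum.reindex)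

lemma subset_sum_poly_Suc_Suc:
  "subset_sum_poly (Suc n) (Suc k)
     = [:0,1:] ^ Suc k * (subset_sum_poly n k + subset_sum_poly n (Suc k))"
proof -
  have one_notin: "1 \<notin> Suc ` T" if "T \<in> k_subsets n j" for T j
    using that by (auto simp: k_subsets_def)
  have sum_shift: "\<Sum>(Suc ` T) = \<Sum>T + j" if "T \<in> k_subsets n j" for T j
    using sum_image_Suc[of T] that by (simp add: k_subsets_def)
  have sum_insert: "\<Sum>(insert 1 (Suc ` T)) = Suc j + \<Sum>T" if "T \<in> k_subsets n j" for T j
    using that finite_if_in_k_subsets[OF that] one_notin[OF that] sum_shift[OF that] by simp
  have inj_shift: "inj_on (\<lambda>T. Suc ` T) (k_subsets n (Suc k))"
    by (simp add: inj_on_def inj_image_eq_iff)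
  have inj_insert: "inj_on (\<lambda>T. insert 1 (Suc ` T)) (k_subsets n k)"
    unfolding inj_on_def using one_notin by (metis inj_Suc inj_image_eq_iff insert_ident)
  have disjoint: "(\<lambda>T. Suc ` T) ` k_subsets n (Suc k) \<inter> (\<lambda>T. insert 1 (Suc ` T)) ` k_subsets n k = {}"
  proof -
    have "Suc ` T \<noteq> insert 1 (Suc ` T')" if "T \<in> k_subsets n (Suc k)" for T T'
      using one_notin[OF that] by blast
    then show ?thesis by blast
  qed
  have "subset_sum_poly (Suc n) (Suc k)
      = (\<Sum>S\<in>(\<lambda>T. Suc ` T) ` k_subsets n (Suc k). [:0,1:] ^ \<Sum>S)
        + (\<Sum>S\<in>(\<lambda>T. insert 1 (Suc ` T)) ` k_subsets n k. [:0,1:] ^ \<Sum>S)"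
    unfolding subset_sum_poly_def k_subsets_Suc_Suc
    by (rule sum.union_disjoint[OF _ _ disjoint]) (simp_all add: finite_k_subsets)
  also have "\<dots> = (\<Sum>T\<in>k_subsets n (Suc k). [:0,1:] ^ \<Sum>(Suc ` T))
        + (\<Sum>T\<in>k_subsets n k. [:0,1:] ^ \<Sum>(insert 1 (Suc ` T)))"
    by (simp only: sum.reindex[OF inj_shift] sum.reindex[OF inj_insert] comp_def)
  also have "\<dots> = (\<Sum>T\<in>k_subsets n (Suc k). [:0,1:] ^ Suc k * [:0,1:] ^ \<Sum>T)
        + (\<Sum>T\<in>k_subsets n k. [:0,1:] ^ Suc k * [:0,1:] ^ \<Sum>T)"
    by (intro arg_cong2[where f = "(+)"] sum.cong refl)
      (simp_all only: sum_shift sum_insert power_add mult.commute)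
  finally show ?thesis
    by (simp only: subset_sum_poly_def sum_distrib_left distrib_left add.commute)
qed

lemma subset_sum_poly_eq_gauss_binomial:
  "subset_sum_poly n k = [:0,1:] ^ (Suc k choose 2) * gauss_binomial n k"
proof (induction n k rule: gauss_binomial.induct)
  case (1 n)
  show ?case by (simp add: subset_sum_poly_def k_subsets_0 numeral_2_eq_2)
next
  case (2 k)
  show ?case by (simp add: subset_sum_poly_def k_subsets_0_Suc)
next
  case (3 n k)
  have "Suc (Suc k) choose 2 = (Suc k choose 2) + Suc k"
    by (simp add: numeral_2_eq_2)
  then show ?case
    by (simp add: subset_sum_poly_Suc_Suc "3.IH" power_add algebra_simps)
qed

lemma card_k_subsets_parity:
  "even_subsets n k = card (k_subsets n k \<inter> {S. even (\<Sum>S)})"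
  "odd_subsets n k = card (k_subsets n k - {S. even (\<Sum>S)})"
  unfolding even_subsets_def odd_subsets_def k_subsets_def
  by (auto intro!: arg_cong[where f = card])

lemma poly_subset_sum_poly_1:
  "poly (subset_sum_poly n k) (1 :: int) = int (even_subsets n k) + int (odd_subsets n k)"
proof -
  have "poly (subset_sum_poly n k) (1 :: int) = int (card (k_subsets n k))"
    by (simp add: subset_sum_poly_def poly_sum)
  also have "\<dots> = int (even_subsets n k) + int (odd_subsets n k)"
    using card_Int_Diff[OF finite_k_subsets, of n k "{S. even (\<Sum>S)}"]
    by (simp add: card_k_subsets_parity)
  finally show ?thesis .
qed

lemma poly_subset_sum_poly_minus_1:
  "poly (subset_sum_poly n k) (-1 :: int) = int (even_subsets n k) - int (odd_subsets n k)"
proof -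
  have "poly (subset_sum_poly n k) (-1 :: int) = (\<Sum>S\<in>k_subsets n k. if even (\<Sum>S) then 1 else -1)"
    by (simp add: subset_sum_poly_def poly_sum minus_one_power_iff)
  also have "\<dots> = int (even_subsets n k) - int (odd_subsets n k)"
    by (simp add: sum.If_cases finite_k_subsets card_k_subsets_parity flip: Diff_eq)
  finally show ?thesis .
qed

lemma x_squared_minus_1_dvdI:
  fixes p :: "int poly"
  assumes "poly p 1 = 0" and "poly p (-1) = 0"
  shows "[:0,1:] ^ 2 - 1 dvd p"
proof -
  obtain r where r: "p = [:-1,1:] * r"
    using assms(1) poly_eq_0_iff_dvd[of p 1] by auto
  then have "poly r (-1) = 0"
    using assms(2) by simp
  then obtain s where s: "r = [:1,1:] * s"
    using poly_eq_0_iff_dvd[of r "-1"] by auto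
  have "[:0,1:] ^ 2 - 1 = ([:-1,1:] * [:1,1:] :: int poly)"
    by (simp add: power2_eq_square one_pCons)
  with r s show ?thesis
    by (metis dvd_triv_left mult.assoc)
qed

lemma poly_gauss_binomial_minus_1_Suc_Suc:
  "poly (gauss_binomial (Suc (Suc n)) k) (-1 :: 'a::comm_ring_1)
     = poly (gauss_binomial n k) (-1) + (if k < 2 then 0 else poly (gauss_binomial n (k - 2)) (-1))"
proof (cases k)
  case 0
  then show ?thesis by simp
next
  case (Suc j)
  then show ?thesis
    by (cases j) (simp_all add: algebra_simps)
qed

lemma binomz_Suc: "binomz (Suc m) k = binomz m k + binomz m (k - 1)"
proof (cases "k < 0")
  case True
  then show ?thesis by (simp add: binomz_def)
next
  case False
  then obtain j where k: "k = int j"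
    by (metis nonneg_int_cases not_less)
  show ?thesis
  proof (cases j)
    case 0
    then show ?thesis using k by (simp add: binomz_def)
  next
    case (Suc i)
    then have "nat k = Suc i" "nat (k - 1) = i" "k - 1 = int i"
      using k by simp_all
    then show ?thesis using k \<open>j = Suc i\<close> by (auto simp: binomz_def binomial_eq_0)
  qed
qed

lemma losanitsch_eq_poly_gauss_binomial_minus_1:
  "2 * losanitsch n k - binomz n k = (if k < 0 then 0 else poly (gauss_binomial n (nat k)) (-1))"
proof (induction n k rule: losanitsch.induct)
  case (1 k)
  show ?case by (auto simp: binomz_def gauss_binomial_eq_0)
next
  case (2 k)
  consider "k < 0" | "k = 0" | "k = 1" | "k \<ge> 2"
    by linarith
  then show ?case
  proof cases
    case 4
    then have "Suc 0 < nat k" by simp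
    with 4 show ?thesis by (simp add: binomz_def gauss_binomial_eq_0)
  qed (simp_all add: binomz_def)
next
  case (3 n k)
  show ?case
  proof (cases "k < 0")
    case True
    then show ?thesis by (simp add: binomz_def)
  next
    case False
    have "2 * losanitsch (Suc (Suc n)) k - binomz (Suc (Suc n)) k
        = (2 * losanitsch n k - binomz n k) + (2 * losanitsch n (k - 2) - binomz n (k - 2))"
      using False by (simp add: binomz_Suc)
    also have "\<dots> = poly (gauss_binomial n (nat k)) (-1)
        + (if nat k < 2 then 0 else poly (gauss_binomial n (nat k - 2)) (-1))"
      using False "3.IH" by (auto simp: nat_diff_distrib nat_less_iff)
    finally show ?thesis
      using False by (simp add: poly_gauss_binomial_minus_1_Suc_Suc)
  qed
qed

theorem theorem4p1:
  fixes n k :: nat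
  shows "([:0,1:] ^ 2 - 1 :: int poly) dvd
           (of_nat (even_subsets n k) + of_nat (odd_subsets n k) * [:0,1:]
             - [:0,1:] ^ (Suc k choose 2) * qbinom n k)
       \<and> ([:0,1:] ^ 2 - 1 :: int poly) dvd
           (of_int (losanitsch n (int k)) + of_int (losanitsch_bar n (int k)) * [:0,1:]
             - qbinom n k)"
proof
  have generating_function: "[:0,1:] ^ (Suc k choose 2) * qbinom n k = subset_sum_poly n k"
    by (simp add: qbinom_eq_gauss_binomial subset_sum_poly_eq_gauss_binomial)
  show "([:0,1:] ^ 2 - 1 :: int poly) dvd
          (of_nat (even_subsets n k) + of_nat (odd_subsets n k) * [:0,1:]
            - [:0,1:] ^ (Suc k choose 2) * qbinom n k)"
    by (rule x_squared_minus_1_dvdI)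
      (simp_all add: generating_function poly_subset_sum_poly_1 poly_subset_sum_poly_minus_1
        of_nat_poly)
  show "([:0,1:] ^ 2 - 1 :: int poly) dvd
          (of_int (losanitsch n (int k)) + of_int (losanitsch_bar n (int k)) * [:0,1:]
            - qbinom n k)"
    using losanitsch_eq_poly_gauss_binomial_minus_1[of n "int k"]
    by (intro x_squared_minus_1_dvdI)
      (simp_all add: qbinom_eq_gauss_binomial poly_gauss_binomial_1 losanitsch_bar_def
        binomz_def of_int_poly)
qed

end
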